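(* Let $(x_k)_{k\ge0}$ be indeterminates, define $a_n=x_n$ if $n=2^k-1$ for some integer $k\ge0$ and $a_n=0$ otherwise, and let $d(n)=\det\left(a_{i+j}\right)_{i,j=0}^{n-1}$ with $d(0)=1$. For $k\ge1$ and $n\ge0$ let $\lambda_k(n)$ denote the degree of $d(n)$ in the variable $x_{2^k-1}$. Then for every $k\ge1$: $\lambda_k(n)=0$ for $0\le n\le 2^{k-1}$; $\lambda_k(2^{k-1}+i)=2i$ for $0\le i\le 2^{k-1}$; $\lambda_k(2^k+i)=2^k-2i$ for $0\le i\le 2^{k-1}$; $\lambda_k(n)=0$ for $2^k+2^{k-1}\le n\le 2^{k+1}$; and for $n>2^{k+1}$, $\lambda_k(n)=\lambda_k(n \bmod 2^{k+1})$.
   Context: The paper writes $d(n)=(-1)^{\sum_{i\ge0}\binom{\lambda_i(n)}{2}}\prod_{i\ge0}x_{2^i-1}^{\lambda_i(n)}$, so $\lambda_i(n)$ is the exponent of $x_{2^i-1}$ in $d(n)$. *)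

theory Defs
  imports "HOL-Library.Poly_Mapping" "Jordan_Normal_Form.Determinant"
begin

text \<open>Multivariate integer polynomials in indeterminates x_0, x_1, ...:
  a polynomial is a finitely supported map from monomials (finitely supported
  exponent vectors) to integer coefficients.\<close>
type_synonym mpoly = "(nat \<Rightarrow>\<^sub>0 nat) \<Rightarrow>\<^sub>0 int"

definition var :: "nat \<Rightarrow> mpoly" where
  "var v = Poly_Mapping.single (Poly_Mapping.single v 1) 1"

definition deg_in :: "nat \<Rightarrow> mpoly \<Rightarrow> nat" where
  "deg_in v p = Max (insert 0 ((\<lambda>m. Poly_Mapping.lookup m v) ` Poly_Mapping.keys p))"

definition seq_a :: "nat \<Rightarrow> mpoly" where
  "seq_a n = (if \<exists>k. n = 2 ^ k - 1 then var n else 0)"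

definition hankel_d :: "nat \<Rightarrow> mpoly" where
  "hankel_d n = det (mat n n (\<lambda>(i, j). seq_a (i + j)))"

definition lam :: "nat \<Rightarrow> nat \<Rightarrow> nat" where
  "lam k n = deg_in (2 ^ k - 1) (hankel_d n)"

lemma "hankel_d 0 = 1" by (simp add: hankel_d_def det_def)

end

theory Submission
  imports Defs
begin

text \<open>The entry a_{i+j} of the Hankel matrix vanishes unless i + j = 2^d - 1. If 2^e < n \<le> 2^(e+1),
  a permutation p with nonzero Leibniz term must pair i with 2^(e+1) - 1 - i on the block
  2^(e+1) - n \<le> i < n (no other power of two fits) and hence permute the remaining 2^(e+1) - n
  indices in the same way. By induction there is exactly one such permutation, so d(n) is a
  signed monomial; its exponent of x_{2^(e+1)-1} is that of d(2^(e+1) - n) plus 2n - 2^(e+1),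
  and all other exponents are inherited from d(2^(e+1) - n). This recursion is solved by a
  tent-shaped profile of period 2^(k+1) that is symmetric under n \<mapsto> 2^(k+1) - n.\<close>

lemma pow2_minus_one_eq:
  assumes "2 ^ e \<le> (2::nat) ^ d - 1" and "(2::nat) ^ d - 1 < 2 ^ Suc (Suc e) - 1"
  shows "d = Suc e"
proof -
  have "1 \<le> (2::nat) ^ d" by simp
  then have "(2::nat) ^ e < 2 ^ d" "(2::nat) ^ d < 2 ^ Suc (Suc e)"
    using assms by linarith+
  then have "e < d" "d < Suc (Suc e)"
    by (auto dest: power_less_imp_less_exp[rotated] simp del: power_Suc)
  then show ?thesis by simp
qed

text \<open>The permutations whose term in the Leibniz expansion of d(n) avoids every zero entry.\<close>

definition admissible :: "nat \<Rightarrow> (nat \<Rightarrow> nat) \<Rightarrow> bool" where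
  "admissible n p \<longleftrightarrow> p permutes {0..<n} \<and> (\<forall>i<n. \<exists>d. i + p i = 2 ^ d - 1)"

lemma admissible_permutes: "admissible n p \<Longrightarrow> p permutes {0..<n}"
  by (simp add: admissible_def)

lemma admissible_less: "admissible n p \<Longrightarrow> i < n \<Longrightarrow> p i < n"
  using permutes_in_image[OF admissible_permutes] by auto

lemma admissible_sum_eq:
  assumes p: "admissible n p" and n: "n \<le> 2 ^ Suc e"
    and i: "i < n" "2 ^ e \<le> i + p i"
  shows "i + p i = 2 ^ Suc e - 1"
proof -
  obtain d where d: "i + p i = 2 ^ d - 1"
    using p i(1) by (auto simp: admissible_def)
  have "i + p i < 2 ^ Suc (Suc e) - 1"
    using admissible_less[OF p i(1)] i(1) n by simp
  with d i(2) have "d = Suc e"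
    using pow2_minus_one_eq by metis
  with d show ?thesis by simp
qed

lemma admissible_reflects:
  assumes p: "admissible n p" and n: "2 ^ e < n" "n \<le> 2 ^ Suc e"
    and i: "2 ^ Suc e - n \<le> i" "i < n"
  shows "p i = 2 ^ Suc e - 1 - i"
proof (cases "2 ^ e \<le> i")
  case True
  with admissible_sum_eq[OF p n(2) i(2)] show ?thesis by simp
next
  case False
  define j where "j = 2 ^ Suc e - 1 - i"
  have j: "2 ^ e \<le> j" "j < n"
    using False i n unfolding j_def by simp_all
  obtain x where x: "p x = j"
    using permutes_surj[OF admissible_permutes[OF p]] by (metis surjD)
  then have "x < n"
    using permutes_in_image[OF admissible_permutes[OF p], of x] j(2) by simp
  have "x + j = 2 ^ Suc e - 1"
    using admissible_sum_eq[OF p n(2) \<open>x < n\<close>] x j by simp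
  then have "x = i"
    using False n unfolding j_def by simp
  with x show ?thesis unfolding j_def by simp
qed

lemma admissible_maps_low:
  assumes p: "admissible n p" and n: "2 ^ e < n" "n \<le> 2 ^ Suc e"
    and i: "i < 2 ^ Suc e - n"
  shows "p i < 2 ^ Suc e - n"
proof (rule ccontr)
  assume "\<not> p i < 2 ^ Suc e - n"
  moreover have "i < n" using i n by simp
  ultimately have pi: "2 ^ Suc e - n \<le> p i" "p i < n"
    using admissible_less[OF p] by simp_all
  define y where "y = 2 ^ Suc e - 1 - p i"
  have y: "2 ^ Suc e - n \<le> y" "y < n"
    using pi n unfolding y_def by simp_all
  have "p y = p i"
    using admissible_reflects[OF p n y] pi n unfolding y_def by simp
  then have "y = i"
    using permutes_inj[OF admissible_permutes[OF p]] by (simp add: inj_eq)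
  with y i show False by simp
qed

lemma admissible_restrict:
  assumes p: "admissible n p" and n: "2 ^ e < n" "n \<le> 2 ^ Suc e"
  shows "admissible (2 ^ Suc e - n) (\<lambda>x. if x < 2 ^ Suc e - n then p x else x)"
    (is "admissible ?m ?q")
proof -
  have "?m \<le> n" using n by simp
  have "inj_on p {0..<?m}"
    using permutes_inj_on[OF admissible_permutes[OF p]] by (rule inj_on_subset) (use \<open>?m \<le> n\<close> in auto)
  then have "inj_on ?q {0..<?m}"
    by (rule inj_on_cong[THEN iffD1, rotated]) simp
  then have "?q permutes {0..<?m}"
    by (rule inj_imp_permutes) (use admissible_maps_low[OF p n] in auto)
  moreover have "\<exists>d. i + ?q i = 2 ^ d - 1" if "i < ?m" for i
    using p that \<open>?m \<le> n\<close> by (simp add: admissible_def)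
  ultimately show ?thesis
    by (simp add: admissible_def)
qed

lemma admissible_extend:
  assumes q: "admissible (2 ^ Suc e - n) q" and n: "2 ^ e < n" "n \<le> 2 ^ Suc e"
  shows "admissible n ((\<lambda>x. if 2 ^ Suc e - n \<le> x \<and> x < n then 2 ^ Suc e - 1 - x else x) \<circ> q)"
    (is "admissible n (?r \<circ> q)")
proof -
  have "2 ^ Suc e - n \<le> n" using n by simp
  have "inj_on ?r {2 ^ Suc e - n..<n}"
  proof (rule inj_onI)
    fix x y
    assume "x \<in> {2 ^ Suc e - n..<n}" "y \<in> {2 ^ Suc e - n..<n}" "?r x = ?r y"
    then show "x = y" using n by simp linarith
  qed
  then have "?r permutes {2 ^ Suc e - n..<n}"
    by (rule inj_imp_permutes) (use n in auto)
  then have "?r permutes {0..<n}"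
    by (rule permutes_subset) auto
  moreover have "q permutes {0..<n}"
    using admissible_permutes[OF q] by (rule permutes_subset) (use \<open>2 ^ Suc e - n \<le> n\<close> in auto)
  ultimately have "?r \<circ> q permutes {0..<n}"
    by (rule permutes_compose[rotated])
  moreover have "\<exists>d. i + (?r \<circ> q) i = 2 ^ d - 1" if "i < n" for i
  proof (cases "i < 2 ^ Suc e - n")
    case True
    then have "(?r \<circ> q) i = q i"
      using admissible_less[OF q True] by simp
    then show ?thesis
      using q True by (simp add: admissible_def)
  next
    case False
    then have "q i = i"
      using permutes_not_in[OF admissible_permutes[OF q]] by simp
    with False that n have "i + (?r \<circ> q) i = 2 ^ Suc e - 1"
      by simp
    then show ?thesis ..
  qed
  ultimately show ?thesis
    by (simp add: admissible_def)
qed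

lemma admissible_small:
  assumes "admissible n p" "n \<le> 1"
  shows "p = id"
proof -
  from assms(2) consider "n = 0" | "n = 1" by linarith
  then show ?thesis
    using admissible_permutes[OF assms(1)] by cases simp_all
qed

lemma admissible_unique: "admissible n p \<Longrightarrow> admissible n q \<Longrightarrow> p = q"
proof (induction n arbitrary: p q rule: less_induct)
  case (less n)
  show ?case
  proof (cases "n \<le> 1")
    case True
    then show ?thesis
      using admissible_small[OF less.prems(1)] admissible_small[OF less.prems(2)] by simp
  next
    case False
    then obtain e where n: "2 ^ e < n" "n \<le> 2 ^ Suc e"
      using ex_power_ivl2[of 2 n] by auto
    have low: "(\<lambda>x. if x < 2 ^ Suc e - n then p x else x) = (\<lambda>x. if x < 2 ^ Suc e - n then q x else x)"
      using less.IH[OF _ admissible_restrict[OF less.prems(1) n] admissible_restrict[OF less.prems(2) n]] n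
      by simp
    show ?thesis
    proof
      fix x
      consider "x < 2 ^ Suc e - n" | "2 ^ Suc e - n \<le> x" "x < n" | "n \<le> x" by linarith
      then show "p x = q x"
      proof cases
        case 1
        then show ?thesis using fun_cong[OF low, of x] by simp
      next
        case 2
        then show ?thesis
          using admissible_reflects[OF less.prems(1) n] admissible_reflects[OF less.prems(2) n] by simp
      next
        case 3
        then show ?thesis
          using permutes_not_in[OF admissible_permutes[OF less.prems(1)]]
            permutes_not_in[OF admissible_permutes[OF less.prems(2)]] by simp
      qed
    qed
  qed
qed

lemma admissible_exists: "\<exists>p. admissible n p"
proof (induction n rule: less_induct)
  case (less n)
  show ?case
  proof (cases "n \<le> 1")
    case True
    then have "admissible n id"
      by (auto simp: admissible_def permutes_id intro: exI[of _ 0])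
    then show ?thesis by (rule exI[of _ id])
  next
    case False
    then obtain e where n: "2 ^ e < n" "n \<le> 2 ^ Suc e"
      using ex_power_ivl2[of 2 n] by auto
    then have "2 ^ Suc e - n < n" by simp
    with less.IH obtain q where q: "admissible (2 ^ Suc e - n) q"
      by blast
    show ?thesis
      by (rule exI, rule admissible_extend[OF q n])
  qed
qed

definition tent :: "nat \<Rightarrow> nat \<Rightarrow> nat" where
  "tent h r = (if r \<le> h then 0 else if r \<le> 2 * h then 2 * (r - h)
     else if r \<le> 3 * h then 6 * h - 2 * r else 0)"

lemma tent_reflect: "r \<le> 4 * h \<Longrightarrow> tent h (4 * h - r) = tent h r"
  by (auto simp: tent_def)

lemma tent_mod_complement:
  assumes "(n + m) mod (4 * h) = 0"
  shows "tent h (n mod (4 * h)) = tent h (m mod (4 * h))"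
proof (cases "h = 0")
  case True
  then show ?thesis by (simp add: tent_def)
next
  case False
  define r s where "r = n mod (4 * h)" and "s = m mod (4 * h)"
  have "r < 4 * h" "s < 4 * h" using False by (simp_all add: r_def s_def)
  have "4 * h dvd r + s"
    using assms by (simp add: r_def s_def dvd_eq_mod_eq_0 mod_add_eq)
  then obtain q where q: "r + s = 4 * h * q" by blast
  with \<open>r < 4 * h\<close> \<open>s < 4 * h\<close> have "4 * h * q < 4 * h * 2" by linarith
  then have "q < 2" by (simp only: mult_less_cancel1)
  with q have "r + s = 0 \<or> r + s = 4 * h" by (auto simp: less_2_cases_iff)
  then have "s = r \<or> s = 4 * h - r" by auto
  then show ?thesis
    using tent_reflect[of r h] \<open>r < 4 * h\<close> by (auto simp flip: r_def s_def)
qed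

lemma admissible_card_split:
  assumes p: "admissible n p" and n: "2 ^ e < n" "n \<le> 2 ^ Suc e"
  shows "card {i. i < n \<and> i + p i = c} = card {i. i < 2 ^ Suc e - n \<and> i + p i = c}
    + (if c = 2 ^ Suc e - 1 then 2 * n - 2 ^ Suc e else 0)"
proof -
  let ?m = "2 ^ Suc e - n"
  let ?low = "{i. i < ?m \<and> i + p i = c}"
  have top: "i + p i = 2 ^ Suc e - 1" if "?m \<le> i" "i < n" for i
    using admissible_reflects[OF p n that] that n by simp
  show ?thesis
  proof (cases "c = 2 ^ Suc e - 1")
    case True
    then have "{i. i < n \<and> i + p i = c} = ?low \<union> {?m..<n}"
      using top n by auto
    moreover have "?low \<inter> {?m..<n} = {}"
      by auto
    ultimately show ?thesis
      using True n by (simp add: card_Un_disjoint)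
  next
    case False
    then have "{i. i < n \<and> i + p i = c} = ?low"
      using top n by (auto simp: not_less) (meson not_less top)
    then show ?thesis
      using False by simp
  qed
qed

lemma tent_first_quarter: "r \<le> h \<Longrightarrow> tent h (r mod (4 * h)) = 0"
  by (cases "h = 0") (simp_all add: tent_def)

lemma tent_recursion:
  assumes n: "2 ^ e < n" "n \<le> 2 ^ Suc e"
  shows "tent (2 ^ j) (n mod (4 * 2 ^ j))
    = tent (2 ^ j) ((2 ^ Suc e - n) mod (4 * 2 ^ j)) + (if j = e then 2 * n - 2 ^ Suc e else 0)"
proof -
  define h :: nat where "h = 2 ^ j"
  let ?m = "2 ^ Suc e - n"
  consider "e < j" | "e = j" | "j < e" by linarith
  then show ?thesis
  proof cases
    case 1
    then have "2 ^ Suc e \<le> h"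
      unfolding h_def by (intro power_increasing) auto
    then show ?thesis
      using tent_first_quarter[of n h] tent_first_quarter[of ?m h] 1 n by (simp add: h_def)
  next
    case 2
    then have "h < n" "n \<le> 2 * h" "?m \<le> h"
      using n by (simp_all add: h_def)
    then show ?thesis
      using tent_first_quarter[of ?m h] 2 by (simp add: h_def tent_def)
  next
    case 3
    then have "(2::nat) ^ Suc (Suc j) dvd 2 ^ Suc e"
      by (intro le_imp_power_dvd) simp
    then have "(n + ?m) mod (4 * h) = 0"
      using n by (simp add: h_def)
    then show ?thesis
      using tent_mod_complement 3 by (simp add: h_def)
  qed
qed

lemma admissible_card_eq_tent:
  assumes "admissible n p"
  shows "card {i. i < n \<and> i + p i = 2 ^ Suc j - 1} = tent (2 ^ j) (n mod (4 * 2 ^ j))"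
  using assms
proof (induction n arbitrary: p rule: less_induct)
  case (less n)
  show ?case
  proof (cases "n \<le> 1")
    case True
    have "1 < (2::nat) ^ Suc j"
      by (rule one_less_power) simp_all
    with True have "{i. i < n \<and> i + p i = 2 ^ Suc j - 1} = {}"
      using admissible_small[OF less.prems True] by auto
    moreover have "1 \<le> (2::nat) ^ j"
      by simp
    with True have "n \<le> 2 ^ j"
      by linarith
    ultimately show ?thesis
      using tent_first_quarter by simp
  next
    case False
    then obtain e where n: "2 ^ e < n" "n \<le> 2 ^ Suc e"
      using ex_power_ivl2[of 2 n] by auto
    let ?m = "2 ^ Suc e - n"
    let ?q = "\<lambda>x. if x < ?m then p x else x"
    have "?m < n" using n by simp
    have "{i. i < ?m \<and> i + p i = 2 ^ Suc j - 1} = {i. i < ?m \<and> i + ?q i = 2 ^ Suc j - 1}"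
      by auto
    then have low: "card {i. i < ?m \<and> i + p i = 2 ^ Suc j - 1} = tent (2 ^ j) (?m mod (4 * 2 ^ j))"
      using less.IH[OF \<open>?m < n\<close> admissible_restrict[OF less.prems n]] by simp
    have "(2::nat) ^ Suc j - 1 = 2 ^ Suc e - 1 \<longleftrightarrow> j = e"
      by (simp add: eq_diff_iff)
    then show ?thesis
      using admissible_card_split[OF less.prems n, of "2 ^ Suc j - 1"] low tent_recursion[OF n, of j]
      by (simp only:)
  qed
qed

lemma deg_in_single: "c \<noteq> 0 \<Longrightarrow> deg_in v (Poly_Mapping.single m c) = Poly_Mapping.lookup m v"
  by (simp add: deg_in_def)

lemma lookup_sum_single_one:
  "finite A \<Longrightarrow> Poly_Mapping.lookup (\<Sum>i\<in>A. Poly_Mapping.single (f i) (1::nat)) v = card {i \<in> A. f i = v}"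
  by (simp add: lookup_sum lookup_single when_def sum.If_cases Int_def)

lemma prod_var:
  "finite A \<Longrightarrow> (\<Prod>i\<in>A. var (f i)) = Poly_Mapping.single (\<Sum>i\<in>A. Poly_Mapping.single (f i) 1) 1"
  by (induction A rule: finite_induct) (simp_all add: var_def mult_single)

lemma hankel_d_admissible:
  assumes s: "admissible n s"
  shows "hankel_d n = Poly_Mapping.single (\<Sum>i\<in>{0..<n}. Poly_Mapping.single (i + s i) 1) (sign s)"
proof -
  let ?A = "mat n n (\<lambda>(i, j). seq_a (i + j))"
  let ?term = "\<lambda>p. signof p * (\<Prod>i = 0..<n. ?A $$ (i, p i))"
  have zero: "?term p = 0" if p: "p permutes {0..<n}" and "p \<noteq> s" for p
  proof -
    have "\<not> admissible n p"
      using admissible_unique[OF _ s] \<open>p \<noteq> s\<close> by blast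
    then obtain i where i: "i < n" "\<nexists>d. i + p i = 2 ^ d - 1"
      using p unfolding admissible_def by blast
    then have "?A $$ (i, p i) = 0"
      using permutes_in_image[OF p, of i] by (simp add: seq_a_def)
    then show ?thesis
      using i(1) by (simp add: prod_zero_iff) force
  qed
  have perms: "finite {p. p permutes {0..<n}}" "s \<in> {p. p permutes {0..<n}}"
    using admissible_permutes[OF s] by (simp_all add: finite_permutations)
  have "hankel_d n = (\<Sum>p\<in>{p. p permutes {0..<n}}. ?term p)"
    unfolding hankel_d_def by (rule det_def') simp
  also have "\<dots> = ?term s + (\<Sum>p\<in>{p. p permutes {0..<n}} - {s}. ?term p)"
    using perms by (rule sum.remove)
  also have "(\<Sum>p\<in>{p. p permutes {0..<n}} - {s}. ?term p) = 0"
    using zero by (intro sum.neutral) blast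
  also have "(\<Prod>i = 0..<n. ?A $$ (i, s i)) = (\<Prod>i = 0..<n. var (i + s i))"
    using s by (intro prod.cong) (auto simp: admissible_def seq_a_def admissible_less)
  also have "\<dots> = Poly_Mapping.single (\<Sum>i\<in>{0..<n}. Poly_Mapping.single (i + s i) 1) 1"
    by (rule prod_var) simp
  also have "(signof s :: mpoly) = Poly_Mapping.single 0 (sign s)"
    by (metis single_of_int of_int_eq_id id_apply)
  finally show ?thesis
    by (simp add: mult_single)
qed

lemma lam_eq_card:
  assumes "admissible n s"
  shows "lam k n = card {i. i < n \<and> i + s i = 2 ^ k - 1}"
proof -
  have "lam k n = Poly_Mapping.lookup (\<Sum>i\<in>{0..<n}. Poly_Mapping.single (i + s i) 1) (2 ^ k - 1)"
    unfolding lam_def hankel_d_admissible[OF assms] by (simp add: deg_in_single)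
  also have "\<dots> = card {i \<in> {0..<n}. i + s i = 2 ^ k - 1}"
    by (rule lookup_sum_single_one) simp
  finally show ?thesis
    by (simp add: atLeast0LessThan)
qed

lemma lam_eq_tent:
  assumes "1 \<le> k"
  shows "lam k n = tent (2 ^ (k - 1)) (n mod 2 ^ (k + 1))"
proof -
  obtain j where k: "k = Suc j"
    using assms by (cases k) auto
  obtain s where "admissible n s"
    using admissible_exists by blast
  then show ?thesis
    unfolding lam_eq_card[OF \<open>admissible n s\<close>] admissible_card_eq_tent[OF \<open>admissible n s\<close>] k
    by simp
qed

theorem theorem4p4:
  fixes k :: nat
  assumes "k \<ge> 1"
  shows "(\<forall>n \<le> 2 ^ (k - 1). lam k n = 0)
       \<and> (\<forall>i \<le> 2 ^ (k - 1). lam k (2 ^ (k - 1) + i) = 2 * i)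
       \<and> (\<forall>i \<le> 2 ^ (k - 1). lam k (2 ^ k + i) = 2 ^ k - 2 * i)
       \<and> (\<forall>n. 2 ^ k + 2 ^ (k - 1) \<le> n \<and> n \<le> 2 ^ (k + 1) \<longrightarrow> lam k n = 0)
       \<and> (\<forall>n > 2 ^ (k + 1). lam k n = lam k (n mod 2 ^ (k + 1)))"
proof -
  define h :: nat where "h = 2 ^ (k - 1)"
  have pow: "2 ^ k = 2 * h" "2 ^ (k + 1) = 4 * h"
    using assms by (cases k; simp add: h_def)+
  have "0 < h"
    by (simp add: h_def)
  have lam: "lam k n = tent h (n mod (4 * h))" for n
    using lam_eq_tent[OF assms] by (simp add: h_def pow)
  have top_quarter: "lam k n = 0" if "3 * h \<le> n" "n \<le> 4 * h" for n
    using that by (cases "n = 4 * h") (simp_all add: lam tent_def)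
  show ?thesis
    unfolding pow h_def[symmetric]
    using \<open>0 < h\<close> top_quarter by (auto simp: lam tent_def)
qed

end
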